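(* Let $W\in\mathbb{R}^n$ have i.i.d. $\mathcal{N}(0,\sigma^2)$ entries. (i) Let $\mathcal{I}$ be a non-random subset of $\{1,\dots,k\}$ with $\#(\mathcal{I})\le n_{\mathcal{I}}$, where $n_{\mathcal{I}}$ is deterministic. Then $$P\Big(\frac{1}{\sigma^2}\|P_{V_{\mathcal{I}}}[W]\|_2^2\ge z^2\Big)\le \exp(-z^2/16)$$ for every $z$ with $z^2\ge 4n_{\mathcal{I}}$. (ii) If instead $\mathcal{I}$ is a random subset of the form $\{(j,t): j\in A,\ 1\le t\le t_j\}$ where $A$ is a random subset of $\{1,\dots,p\}$ of cardinality at most $L$ ($L$ a deterministic constant), then the same inequality holds for every $z$ with $z^2\ge 16\,L\,(t^*\vee\log p)$. In particular, for such a set, for every $k\ge 1$ there exists a constant $C_k$ such that $$E\Big(\frac{1}{\sigma^2}\|P_{V_{\mathcal{I}}}[W]\|_2^2\Big)^k\le C_k\,L^k\,(t^*\vee\log p)^k.$$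
   Context: $\tilde X\in\mathbb{R}^{n\times k}$ is a fixed (deterministic) matrix; $V_{\mathcal{I}}$ is the span of its columns indexed by $\mathcal{I}$ and $P_{V_{\mathcal{I}}}$ the orthogonal projection onto $V_{\mathcal{I}}$. $\mathcal{G}_1,\dots,\mathcal{G}_p$ is a partition of $\{1,\dots,k\}$ with $t_j=\#\mathcal{G}_j$, $t^*=\max_j t_j$; index $\ell$ is written $(j,t)$ with $j$ its group and $t\in\{1,\dots,t_j\}$ its rank inside $\mathcal{G}_j$. *)

theory Defs
  imports "HOL-Probability.Probability"
begin

text \<open>Vectors of R^n are represented as functions nat => real, only the
coordinates i < n being relevant.  The design matrix is X :: nat => nat => real
with entry (i,l) for row i < n and column l in {1..k}.\<close>

definition vinner :: "nat \<Rightarrow> (nat \<Rightarrow> real) \<Rightarrow> (nat \<Rightarrow> real) \<Rightarrow> real" where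
  "vinner n x y = (\<Sum>i<n. x i * y i)"

definition sqnorm :: "nat \<Rightarrow> (nat \<Rightarrow> real) \<Rightarrow> real" where
  "sqnorm n x = vinner n x x"

definition colvec :: "nat \<Rightarrow> (nat \<Rightarrow> nat \<Rightarrow> real) \<Rightarrow> nat \<Rightarrow> (nat \<Rightarrow> real)" where
  "colvec n X l = (\<lambda>i. if i < n then X i l else 0)"

definition colspan :: "nat \<Rightarrow> (nat \<Rightarrow> nat \<Rightarrow> real) \<Rightarrow> nat set \<Rightarrow> (nat \<Rightarrow> real) set" where
  "colspan n X I = {v. \<exists>c. v = (\<lambda>i. \<Sum>l\<in>I. c l * colvec n X l i)}"

definition proj :: "nat \<Rightarrow> (nat \<Rightarrow> nat \<Rightarrow> real) \<Rightarrow> nat set \<Rightarrow> (nat \<Rightarrow> real) \<Rightarrow> (nat \<Rightarrow> real)" where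
  "proj n X I w = (THE v. v \<in> colspan n X I \<and>
      (\<forall>u\<in>colspan n X I. vinner n (\<lambda>i. w i - v i) u = 0))"

definition iid_gaussian :: "'a measure \<Rightarrow> ('a \<Rightarrow> nat \<Rightarrow> real) \<Rightarrow> nat \<Rightarrow> real \<Rightarrow> bool" where
  "iid_gaussian M W n \<sigma> \<longleftrightarrow> prob_space M \<and> \<sigma> > 0 \<and>
     prob_space.indep_vars M (\<lambda>_. borel) (\<lambda>i \<omega>. W \<omega> i) {..<n} \<and>
     (\<forall>i<n. distributed M lborel (\<lambda>\<omega>. W \<omega> i) (normal_density 0 \<sigma>))"

definition is_group_partition :: "nat \<Rightarrow> nat \<Rightarrow> (nat \<Rightarrow> nat set) \<Rightarrow> bool" where
  "is_group_partition p k G \<longleftrightarrow> p \<ge> 1 \<and> (\<forall>j\<in>{1..p}. G j \<noteq> {}) \<and>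
     disjoint_family_on G {1..p} \<and> (\<Union>j\<in>{1..p}. G j) = {1..k}"

definition tstar :: "nat \<Rightarrow> (nat \<Rightarrow> nat set) \<Rightarrow> nat" where
  "tstar p G = Max ((\<lambda>j. card (G j)) ` {1..p})"

text \<open>A random subset A of {1..p} with card at most L (measurable as a
random element of the finite set of subsets).\<close>
definition random_group_set :: "'a measure \<Rightarrow> ('a \<Rightarrow> nat set) \<Rightarrow> nat \<Rightarrow> nat \<Rightarrow> bool" where
  "random_group_set M A p L \<longleftrightarrow>
     (\<forall>\<omega>\<in>space M. A \<omega> \<subseteq> {1..p} \<and> card (A \<omega>) \<le> L) \<and>
     (\<forall>S. {\<omega>\<in>space M. A \<omega> = S} \<in> sets M)"

end

theory Submission
  imports Defs
begin

(* Gram--Schmidt gives an orthonormal basis u_1, ..., u_d of V_I with d \<le> #I, so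
   \<parallel>P_{V_I} W\<parallel>^2 / \<sigma>^2 = \<Sum>_r <u_r, W>^2 / \<sigma>^2 is chi-square with d degrees of freedom and has
   moment generating function (1 - 2\<theta>)^(-d/2).  This is computed without showing that the
   coordinates <u_r, W> are independent: each square is linearised by the Hubbard--Stratonovich
   identity exp (\<theta> z^2) = E exp (sqrt (2\<theta>) z T), T standard normal, which leaves only the
   Gaussian moment generating function of linear forms.  Chernoff's bound with \<theta> = 1/4 gives (i).
   For a random union of at most L groups, exp (\<theta> Y) is bounded by the sum over the at most
   (p + 1)^L admissible supports, each spanned by at most L t^* columns; \<theta> = 1/4 gives (ii), and
   \<theta> = 1/8 together with y^m \<le> (4B)^m + (16m)^m exp (y/8 - B/4) for B = 16 L (t^* \<or> log p)
   gives (iii) with C_m = 64^m + (16m)^m. *)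

section \<open>Orthonormal bases of column spans\<close>

definition lincomb :: "nat \<Rightarrow> (nat \<Rightarrow> nat \<Rightarrow> real) \<Rightarrow> (nat \<Rightarrow> real) \<Rightarrow> nat \<Rightarrow> real" where
  "lincomb d u a = (\<lambda>i. \<Sum>r<d. a r * u r i)"

definition orthonormal :: "nat \<Rightarrow> nat \<Rightarrow> (nat \<Rightarrow> nat \<Rightarrow> real) \<Rightarrow> bool" where
  "orthonormal n d u \<longleftrightarrow> (\<forall>r<d. \<forall>s<d. vinner n (u r) (u s) = (if r = s then 1 else 0))
      \<and> (\<forall>r<d. \<forall>i\<ge>n. u r i = 0)"

definition orthonormal_basis :: "nat \<Rightarrow> (nat \<Rightarrow> nat \<Rightarrow> real) \<Rightarrow> nat set \<Rightarrow> nat \<Rightarrow> (nat \<Rightarrow> nat \<Rightarrow> real) \<Rightarrow> bool" where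
  "orthonormal_basis n X I d u \<longleftrightarrow> d \<le> card I \<and> orthonormal n d u \<and> (\<forall>r<d. u r \<in> colspan n X I)
     \<and> (\<forall>l\<in>I. \<exists>a. colvec n X l = lincomb d u a)"

lemma vinner_commute: "vinner n x y = vinner n y x"
  by (simp add: vinner_def mult.commute)

lemma vinner_lincomb_left: "vinner n (lincomb d u a) x = (\<Sum>r<d. a r * vinner n (u r) x)"
  unfolding vinner_def lincomb_def
  by (simp add: sum_distrib_right sum_distrib_left mult.assoc sum.swap[of _ "{..<n}"])

lemma vinner_lincomb_right: "vinner n x (lincomb d u a) = (\<Sum>r<d. a r * vinner n x (u r))"
  using vinner_lincomb_left[of n d u a x] by (simp add: vinner_commute)

lemma vinner_diff_left: "vinner n (\<lambda>i. f i - g i) x = vinner n f x - vinner n g x"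
  unfolding vinner_def by (simp add: left_diff_distrib sum_subtractf)

lemma vinner_scale_left: "vinner n (\<lambda>i. f i / c) x = vinner n f x / c"
  unfolding vinner_def by (simp add: sum_divide_distrib)

lemma sqnorm_nonneg: "sqnorm n x \<ge> 0"
  unfolding sqnorm_def vinner_def by (auto intro: sum_nonneg)

lemma sqnorm_eq_0_imp_eq_0:
  assumes "sqnorm n x = 0" "i < n" shows "x i = 0"
proof -
  have "(\<Sum>j<n. x j * x j) = 0" using assms unfolding sqnorm_def vinner_def by simp
  hence "\<forall>j\<in>{..<n}. x j * x j = 0" by (subst (asm) sum_nonneg_eq_0_iff) auto
  thus ?thesis using assms by auto
qed

lemma orthonormal_vinner_lincomb:
  assumes "orthonormal n d u" "s < d"
  shows "vinner n (lincomb d u a) (u s) = a s"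
proof -
  have "vinner n (lincomb d u a) (u s) = (\<Sum>r<d. if r = s then a r else 0)"
    using assms unfolding vinner_lincomb_left orthonormal_def by (intro sum.cong) auto
  also have "\<dots> = a s" using assms(2) by (simp add: sum.delta)
  finally show ?thesis .
qed

lemma orthonormal_vinner_lincomb_lincomb:
  assumes "orthonormal n d u"
  shows "vinner n (lincomb d u a) (lincomb d u b) = (\<Sum>r<d. a r * b r)"
  unfolding vinner_lincomb_right using orthonormal_vinner_lincomb[OF assms]
  by (intro sum.cong) (auto simp: mult.commute)

lemma orthonormal_extend:
  assumes on: "orthonormal n d u" and orth: "\<And>r. r < d \<Longrightarrow> vinner n y (u r) = 0"
    and y0: "\<And>i. i \<ge> n \<Longrightarrow> y i = 0" and yn: "sqnorm n y \<noteq> 0"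
  shows "orthonormal n (Suc d) (u(d := (\<lambda>i. y i / sqrt (sqnorm n y))))"
proof -
  let ?e = "\<lambda>i. y i / sqrt (sqnorm n y)"
  have pos: "sqnorm n y > 0" using yn sqnorm_nonneg[of n y] by linarith
  have "vinner n ?e ?e = sqnorm n y / (sqrt (sqnorm n y))\<^sup>2"
    unfolding vinner_def sqnorm_def by (simp add: sum_divide_distrib times_divide_times_eq power2_eq_square)
  hence ee: "vinner n ?e ?e = 1" using pos by simp
  have eu: "vinner n ?e (u r) = 0" if "r < d" for r
    using orth[OF that] by (simp add: vinner_scale_left)
  show ?thesis
    using on ee eu y0 unfolding orthonormal_def
    by (auto simp: less_Suc_eq vinner_commute)
qed

lemma colspan_vanishes: "v \<in> colspan n X I \<Longrightarrow> i \<ge> n \<Longrightarrow> v i = 0"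
  unfolding colspan_def colvec_def by auto

lemma colspan_add_scale:
  assumes "v \<in> colspan n X I" "w \<in> colspan n X I"
  shows "(\<lambda>i. \<alpha> * v i + \<beta> * w i) \<in> colspan n X I"
proof -
  obtain c c' where "v = (\<lambda>i. \<Sum>l\<in>I. c l * colvec n X l i)" "w = (\<lambda>i. \<Sum>l\<in>I. c' l * colvec n X l i)"
    using assms unfolding colspan_def by auto
  thus ?thesis unfolding colspan_def
    by (auto intro!: exI[of _ "\<lambda>l. \<alpha> * c l + \<beta> * c' l"]
        simp: sum_distrib_left sum.distrib algebra_simps)
qed

lemma colspan_lincomb:
  assumes "\<forall>r<d. u r \<in> colspan n X I"
  shows "lincomb d u a \<in> colspan n X I"
proof -
  from assms have "\<forall>r\<in>{..<d}. \<exists>c. u r = (\<lambda>i. \<Sum>l\<in>I. c l * colvec n X l i)"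
    unfolding colspan_def by auto
  then obtain c where c: "\<forall>r\<in>{..<d}. u r = (\<lambda>i. \<Sum>l\<in>I. c r l * colvec n X l i)"
    by metis
  have "lincomb d u a = (\<lambda>i. \<Sum>l\<in>I. (\<Sum>r<d. a r * c r l) * colvec n X l i)"
    unfolding lincomb_def using c
    by (auto simp: sum_distrib_left sum_distrib_right mult.assoc intro!: ext sum.swap)
  thus ?thesis unfolding colspan_def by auto
qed

lemma colspan_mono:
  assumes "finite J" "I \<subseteq> J" "v \<in> colspan n X I" shows "v \<in> colspan n X J"
proof -
  obtain c where c: "v = (\<lambda>i. \<Sum>l\<in>I. c l * colvec n X l i)" using assms unfolding colspan_def by auto
  define c' where "c' l = (if l \<in> I then c l else 0)" for l
  have "v = (\<lambda>i. \<Sum>l\<in>J. c' l * colvec n X l i)"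
    using assms(1,2) by (auto simp: c c'_def if_distrib intro!: ext sum.mono_neutral_cong_left)
  thus ?thesis unfolding colspan_def by blast
qed

lemma colvec_in_colspan:
  assumes "finite I" "l \<in> I" shows "colvec n X l \<in> colspan n X I"
proof -
  have "I \<inter> {l'. l' = l} = {l}" using assms(2) by auto
  hence "colvec n X l = (\<lambda>i. \<Sum>l'\<in>I. of_bool (l' = l) * colvec n X l' i)"
    using assms(1) by simp
  thus ?thesis unfolding colspan_def by (blast intro: exI[of _ "\<lambda>l'. of_bool (l' = l)"])
qed

lemma lincomb_Suc_upd:
  "lincomb (Suc d) (u(d := v)) (a(d := c)) = (\<lambda>i. lincomb d u a i + c * v i)"
  unfolding lincomb_def by (auto intro!: ext sum.cong)

lemma orthonormal_basis_insert_dependent: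
  assumes basis: "orthonormal_basis n X I d u" and fin: "finite I" and new: "l \<notin> I"
    and l: "colvec n X l = lincomb d u a"
  shows "orthonormal_basis n X (insert l I) d u"
proof -
  have "u r \<in> colspan n X (insert l I)" if "r < d" for r
    using basis that fin by (intro colspan_mono[where J="insert l I" and I=I]) (auto simp: orthonormal_basis_def)
  thus ?thesis using basis l fin new by (auto simp: orthonormal_basis_def)
qed

lemma orthonormal_basis_insert_independent:
  assumes basis: "orthonormal_basis n X I d u" and fin: "finite I" and new: "l \<notin> I"
    and l: "colvec n X l = (\<lambda>i. lincomb d u a i + y i)"
    and y_orth: "\<And>r. r < d \<Longrightarrow> vinner n y (u r) = 0"
    and y_in: "y \<in> colspan n X (insert l I)" and y_ne: "sqnorm n y \<noteq> 0"
  shows "orthonormal_basis n X (insert l I) (Suc d) (u(d := (\<lambda>i. y i / sqrt (sqnorm n y))))"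
    (is "orthonormal_basis _ _ _ _ ?u'")
proof -
  define \<nu> where "\<nu> = sqrt (sqnorm n y)"
  have "\<nu> > 0" using y_ne sqnorm_nonneg[of n y] by (simp add: \<nu>_def)
  have on: "orthonormal n (Suc d) ?u'"
    using basis y_orth colspan_vanishes[OF y_in] y_ne
    by (intro orthonormal_extend) (auto simp: orthonormal_basis_def)
  have "(\<lambda>i. (1 / \<nu>) * y i + 0 * y i) \<in> colspan n X (insert l I)"
    by (rule colspan_add_scale[OF y_in y_in])
  hence "\<forall>r<Suc d. ?u' r \<in> colspan n X (insert l I)"
    using basis fin colspan_mono[where J="insert l I" and I=I]
    by (auto simp: orthonormal_basis_def less_Suc_eq \<nu>_def)
  moreover have extend: "lincomb (Suc d) ?u' (b(d := c)) = (\<lambda>i. lincomb d u b i + c * (y i / \<nu>))"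
    for b c unfolding \<nu>_def by (rule lincomb_Suc_upd)
  have "colvec n X l = lincomb (Suc d) ?u' (a(d := \<nu>))"
    unfolding extend l using \<open>\<nu> > 0\<close> by simp
  moreover have "\<exists>b'. colvec n X l' = lincomb (Suc d) ?u' b'" if "l' \<in> I" for l'
  proof -
    from basis that obtain b where "colvec n X l' = lincomb d u b" by (auto simp: orthonormal_basis_def)
    hence "colvec n X l' = lincomb (Suc d) ?u' (b(d := 0))" unfolding extend by simp
    thus ?thesis by blast
  qed
  ultimately show ?thesis
    using on basis fin new by (auto simp: orthonormal_basis_def)
qed

text \<open>One Gram--Schmidt step: the residual of the new column against the current basis is
either zero or, normalised, extends the basis.\<close>

lemma orthonormal_basis_insert:
  assumes fin: "finite I" and new: "l \<notin> I" and basis: "orthonormal_basis n X I d u"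
  shows "\<exists>d' u'. orthonormal_basis n X (insert l I) d' u'"
proof -
  have on: "orthonormal n d u" and uin: "\<forall>r<d. u r \<in> colspan n X (insert l I)"
    using basis fin colspan_mono[where J="insert l I" and I=I] by (auto simp: orthonormal_basis_def)
  define a where "a r = vinner n (u r) (colvec n X l)" for r
  define y where "y i = colvec n X l i - lincomb d u a i" for i
  have l: "colvec n X l = (\<lambda>i. lincomb d u a i + y i)" by (simp add: y_def)
  have y_orth: "vinner n y (u s) = 0" if "s < d" for s
    unfolding y_def vinner_diff_left using orthonormal_vinner_lincomb[OF on that]
    by (simp add: a_def vinner_commute)
  have "y = (\<lambda>i. 1 * colvec n X l i + (-1) * lincomb d u a i)" by (simp add: y_def fun_eq_iff)
  also have "\<dots> \<in> colspan n X (insert l I)"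
    using fin by (intro colspan_add_scale colspan_lincomb[OF uin] colvec_in_colspan) auto
  finally have y_in: "y \<in> colspan n X (insert l I)" .
  show ?thesis
  proof (cases "sqnorm n y = 0")
    case True
    have "y = (\<lambda>_. 0)"
    proof
      fix i show "y i = 0"
        using sqnorm_eq_0_imp_eq_0[OF True, of i] colspan_vanishes[OF y_in, of i] by linarith
    qed
    hence "orthonormal_basis n X (insert l I) d u"
      using orthonormal_basis_insert_dependent[OF basis fin new] l by (simp add: lincomb_def)
    thus ?thesis by blast
  next
    case False
    thus ?thesis
      using orthonormal_basis_insert_independent[OF basis fin new l y_orth y_in] by blast
  qed
qed

lemma orthonormal_basis_exists:
  assumes "finite I" shows "\<exists>d u. orthonormal_basis n X I d u"
  using assms
proof (induction I rule: finite_induct)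
  case empty
  have "orthonormal_basis n X {} 0 u" for u by (simp add: orthonormal_basis_def orthonormal_def)
  thus ?case by blast
next
  case (insert l I)
  thus ?case using orthonormal_basis_insert by blast
qed

lemma orthonormal_basis_spans:
  assumes "orthonormal_basis n X I d u" "v \<in> colspan n X I"
  shows "\<exists>b. v = lincomb d u b"
proof -
  obtain c where c: "v = (\<lambda>i. \<Sum>l\<in>I. c l * colvec n X l i)" using assms unfolding colspan_def by auto
  obtain a where a: "\<forall>l\<in>I. colvec n X l = lincomb d u (a l)"
    using assms(1) unfolding orthonormal_basis_def by metis
  have "v = lincomb d u (\<lambda>r. \<Sum>l\<in>I. c l * a l r)"
    unfolding c using a
    by (auto simp: lincomb_def sum_distrib_left sum_distrib_right mult.assoc intro!: ext sum.swap)
  thus ?thesis by blast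
qed

lemma proj_eqI:
  assumes v: "v \<in> colspan n X I" and orth: "\<forall>x\<in>colspan n X I. vinner n (\<lambda>i. w i - v i) x = 0"
  shows "proj n X I w = v"
  unfolding proj_def
proof (rule the_equality)
  show "v \<in> colspan n X I \<and> (\<forall>x\<in>colspan n X I. vinner n (\<lambda>i. w i - v i) x = 0)"
    using assms by blast
next
  fix v' assume v': "v' \<in> colspan n X I \<and> (\<forall>x\<in>colspan n X I. vinner n (\<lambda>i. w i - v' i) x = 0)"
  define e where "e = (\<lambda>i. 1 * v i + (-1) * v' i)"
  have e_in: "e \<in> colspan n X I"
    unfolding e_def using v' by (intro colspan_add_scale[OF v]) simp
  have "(\<lambda>i. (w i - v' i) - (w i - v i)) = e" by (auto simp: e_def)
  hence "sqnorm n e = 0"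
    using vinner_diff_left[of n "\<lambda>i. w i - v' i" "\<lambda>i. w i - v i" e] v' orth e_in
    by (simp add: sqnorm_def)
  show "v' = v"
  proof
    fix i show "v' i = v i"
      using sqnorm_eq_0_imp_eq_0[OF \<open>sqnorm n e = 0\<close>, of i] colspan_vanishes[OF e_in, of i]
      by (cases "i < n") (auto simp: e_def)
  qed
qed

lemma proj_eq_lincomb:
  assumes basis: "orthonormal_basis n X I d u"
  shows "proj n X I w = lincomb d u (\<lambda>r. vinner n (u r) w)"
proof (rule proj_eqI)
  have on: "orthonormal n d u" and uin: "\<forall>r<d. u r \<in> colspan n X I"
    using basis by (auto simp: orthonormal_basis_def)
  show "lincomb d u (\<lambda>r. vinner n (u r) w) \<in> colspan n X I" by (rule colspan_lincomb[OF uin])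
  show "\<forall>x\<in>colspan n X I. vinner n (\<lambda>i. w i - lincomb d u (\<lambda>r. vinner n (u r) w) i) x = 0"
  proof
    fix x assume "x \<in> colspan n X I"
    then obtain b where "x = lincomb d u b" using orthonormal_basis_spans[OF basis] by blast
    thus "vinner n (\<lambda>i. w i - lincomb d u (\<lambda>r. vinner n (u r) w) i) x = 0"
      using orthonormal_vinner_lincomb[OF on]
      by (simp add: vinner_lincomb_right vinner_diff_left vinner_commute mult.commute)
  qed
qed

lemma sqnorm_proj_eq_sum:
  assumes "orthonormal_basis n X I d u"
  shows "sqnorm n (proj n X I w) = (\<Sum>r<d. (vinner n (u r) w)\<^sup>2)"
proof -
  have on: "orthonormal n d u" using assms by (simp add: orthonormal_basis_def)
  show ?thesis
    unfolding proj_eq_lincomb[OF assms] sqnorm_def orthonormal_vinner_lincomb_lincomb[OF on]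
    by (simp add: power2_eq_square)
qed

section \<open>Gaussian integrals\<close>

lemma nn_integral_normal_density:
  "\<sigma> > 0 \<Longrightarrow> (\<integral>\<^sup>+t. ennreal (normal_density \<mu> \<sigma> t) \<partial>lborel) = 1"
  by (subst nn_integral_eq_integral) (auto intro: integrable_normal_density simp: integral_normal_density)

lemma normal_density_mult_exp_quadratic:
  fixes \<sigma> a b \<theta> t :: real
  assumes \<sigma>: "\<sigma> > 0" and a: "a = 1 - 2 * \<theta> * \<sigma>\<^sup>2" "a > 0"
  shows "normal_density 0 \<sigma> t * exp (b * t + \<theta> * t\<^sup>2) =
     exp (b\<^sup>2 * \<sigma>\<^sup>2 / (2 * a)) / sqrt a * normal_density (b * \<sigma>\<^sup>2 / a) (\<sigma> / sqrt a) t"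
proof -
  have sa: "sqrt a > 0" "(sqrt a)\<^sup>2 = a" using a by simp_all
  have var: "(\<sigma> / sqrt a)\<^sup>2 = \<sigma>\<^sup>2 / a" using sa by (simp add: power_divide)
  have "-(t - b * \<sigma>\<^sup>2 / a)\<^sup>2 / (2 * (\<sigma> / sqrt a)\<^sup>2) + b\<^sup>2 * \<sigma>\<^sup>2 / (2 * a)
      = - a * t\<^sup>2 / (2 * \<sigma>\<^sup>2) + b * t"
    unfolding var using \<sigma> a(2) by (simp add: field_simps power2_eq_square)
  also have "- a * t\<^sup>2 / (2 * \<sigma>\<^sup>2) = -(t - 0)\<^sup>2 / (2 * \<sigma>\<^sup>2) + \<theta> * t\<^sup>2"
    unfolding a(1) using \<sigma> by (simp add: field_simps)
  finally have exponent: "-(t - b * \<sigma>\<^sup>2 / a)\<^sup>2 / (2 * (\<sigma> / sqrt a)\<^sup>2) + b\<^sup>2 * \<sigma>\<^sup>2 / (2 * a)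
      = -(t - 0)\<^sup>2 / (2 * \<sigma>\<^sup>2) + (b * t + \<theta> * t\<^sup>2)" by simp
  have factor: "1 / sqrt (2 * pi * \<sigma>\<^sup>2) = 1 / sqrt a * (1 / sqrt (2 * pi * (\<sigma> / sqrt a)\<^sup>2))"
    using \<sigma> a sa by (simp add: power_divide real_sqrt_divide real_sqrt_mult)
  have "normal_density 0 \<sigma> t * exp (b * t + \<theta> * t\<^sup>2) =
        1 / sqrt (2 * pi * \<sigma>\<^sup>2) * exp (-(t - 0)\<^sup>2 / (2 * \<sigma>\<^sup>2) + (b * t + \<theta> * t\<^sup>2))"
    unfolding normal_density_def exp_add by simp
  also have "\<dots> = 1 / sqrt a * (1 / sqrt (2 * pi * (\<sigma> / sqrt a)\<^sup>2)) *
      exp (-(t - b * \<sigma>\<^sup>2 / a)\<^sup>2 / (2 * (\<sigma> / sqrt a)\<^sup>2) + b\<^sup>2 * \<sigma>\<^sup>2 / (2 * a))"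
    unfolding exponent factor ..
  also have "\<dots> = exp (b\<^sup>2 * \<sigma>\<^sup>2 / (2 * a)) / sqrt a * normal_density (b * \<sigma>\<^sup>2 / a) (\<sigma> / sqrt a) t"
    unfolding normal_density_def exp_add by simp
  finally show ?thesis .
qed

lemma nn_integral_normal_density_exp_quadratic:
  fixes \<sigma> b \<theta> :: real
  assumes \<sigma>: "\<sigma> > 0" and a: "1 - 2 * \<theta> * \<sigma>\<^sup>2 > 0"
  shows "(\<integral>\<^sup>+t. ennreal (normal_density 0 \<sigma> t * exp (b * t + \<theta> * t\<^sup>2)) \<partial>lborel) =
     ennreal (exp (b\<^sup>2 * \<sigma>\<^sup>2 / (2 * (1 - 2 * \<theta> * \<sigma>\<^sup>2))) / sqrt (1 - 2 * \<theta> * \<sigma>\<^sup>2))"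
proof -
  define a where "a = 1 - 2 * \<theta> * \<sigma>\<^sup>2"
  have "(\<integral>\<^sup>+t. ennreal (normal_density 0 \<sigma> t * exp (b * t + \<theta> * t\<^sup>2)) \<partial>lborel) =
     (\<integral>\<^sup>+t. ennreal (exp (b\<^sup>2 * \<sigma>\<^sup>2 / (2 * a)) / sqrt a) *
        ennreal (normal_density (b * \<sigma>\<^sup>2 / a) (\<sigma> / sqrt a) t) \<partial>lborel)"
    using normal_density_mult_exp_quadratic[OF \<sigma> a_def] a unfolding a_def[symmetric]
    by (intro nn_integral_cong, subst ennreal_mult[symmetric]) (auto simp: field_simps)
  also have "\<dots> = ennreal (exp (b\<^sup>2 * \<sigma>\<^sup>2 / (2 * a)) / sqrt a)"
    using \<sigma> a unfolding a_def[symmetric]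
    by (subst nn_integral_cmult) (auto simp: nn_integral_normal_density)
  finally show ?thesis unfolding a_def .
qed

text \<open>Hubbard--Stratonovich: a square in the exponent is a Gaussian average of linear exponents.\<close>

lemma exp_square_eq_nn_integral_normal:
  assumes "0 \<le> \<theta>"
  shows "ennreal (exp (\<theta> * z\<^sup>2)) =
    (\<integral>\<^sup>+t. ennreal (normal_density 0 1 t * exp (sqrt (2 * \<theta>) * z * t)) \<partial>lborel)"
  using nn_integral_normal_density_exp_quadratic[where \<sigma>=1 and \<theta>=0 and b="sqrt (2 * \<theta>) * z"] assms
  by (simp add: power_mult_distrib)

lemma (in sigma_finite_measure) nn_integral_exp_square_linearize:
  assumes [measurable]: "f \<in> borel_measurable M" "Z \<in> borel_measurable M" and "0 \<le> \<theta>"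
  shows "(\<integral>\<^sup>+\<omega>. ennreal (exp (f \<omega> + \<theta> * (Z \<omega>)\<^sup>2)) \<partial>M) =
    (\<integral>\<^sup>+t. ennreal (normal_density 0 1 t) *
       (\<integral>\<^sup>+\<omega>. ennreal (exp (f \<omega> + sqrt (2 * \<theta>) * t * Z \<omega>)) \<partial>M) \<partial>lborel)"
proof -
  have "(\<integral>\<^sup>+\<omega>. ennreal (exp (f \<omega> + \<theta> * (Z \<omega>)\<^sup>2)) \<partial>M) =
     (\<integral>\<^sup>+\<omega>. (\<integral>\<^sup>+t. ennreal (normal_density 0 1 t) * ennreal (exp (f \<omega> + sqrt (2 * \<theta>) * t * Z \<omega>)) \<partial>lborel) \<partial>M)"
  proof (intro nn_integral_cong)
    fix \<omega>
    have "ennreal (exp (f \<omega> + \<theta> * (Z \<omega>)\<^sup>2)) = ennreal (exp (f \<omega>)) * ennreal (exp (\<theta> * (Z \<omega>)\<^sup>2))"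
      by (simp add: exp_add ennreal_mult)
    also have "\<dots> = (\<integral>\<^sup>+t. ennreal (exp (f \<omega>)) * ennreal (normal_density 0 1 t * exp (sqrt (2 * \<theta>) * Z \<omega> * t)) \<partial>lborel)"
      by (subst exp_square_eq_nn_integral_normal[OF \<open>0 \<le> \<theta>\<close>]) (rule nn_integral_cmult[symmetric], measurable)
    finally show "ennreal (exp (f \<omega> + \<theta> * (Z \<omega>)\<^sup>2)) = (\<integral>\<^sup>+t. ennreal (normal_density 0 1 t) * ennreal (exp (f \<omega> + sqrt (2 * \<theta>) * t * Z \<omega>)) \<partial>lborel)"
      by (simp add: exp_add ennreal_mult mult_ac)
  qed
  also have "\<dots> = (\<integral>\<^sup>+t. (\<integral>\<^sup>+\<omega>. ennreal (normal_density 0 1 t) * ennreal (exp (f \<omega> + sqrt (2 * \<theta>) * t * Z \<omega>)) \<partial>M) \<partial>lborel)"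
  proof -
    interpret P: pair_sigma_finite M lborel by unfold_locales
    show ?thesis
      by (rule P.Fubini'[symmetric]) measurable
  qed
  also have "\<dots> = (\<integral>\<^sup>+t. ennreal (normal_density 0 1 t) *
       (\<integral>\<^sup>+\<omega>. ennreal (exp (f \<omega> + sqrt (2 * \<theta>) * t * Z \<omega>)) \<partial>M) \<partial>lborel)"
    by (intro nn_integral_cong nn_integral_cmult) measurable
  finally show ?thesis .
qed

section \<open>The projected noise as a chi-square variable\<close>

lemma powr_minus_Suc_half:
  fixes x :: real assumes "0 < x"
  shows "x powr (- real (Suc e) / 2) = x powr (- real e / 2) / sqrt x"
proof -
  have "- real (Suc e) / 2 = - real e / 2 - 1 / 2" by simp
  thus ?thesis using assms by (simp only: powr_diff powr_half_sqrt)
qed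

lemma sum_lessThan_add_delta_mult:
  fixes b z :: "nat \<Rightarrow> real" assumes "e < d"
  shows "(\<Sum>r<d. (b r + (if r = e then c else 0)) * z r) = (\<Sum>r<d. b r * z r) + c * z e"
proof -
  have "(\<Sum>r<d. (b r + (if r = e then c else 0)) * z r) = (\<Sum>r<d. b r * z r + (if r = e then c * z r else 0))"
    by (intro sum.cong) (auto simp: algebra_simps)
  thus ?thesis using assms by (simp add: sum.distrib)
qed

lemma sum_lessThan_add_delta_square:
  fixes b :: "nat \<Rightarrow> real" assumes "e < d"
  shows "(\<Sum>r<d. (b r + (if r = e then c else 0))\<^sup>2) = (\<Sum>r<d. (b r)\<^sup>2) + 2 * b e * c + c\<^sup>2"
proof -
  have "(\<Sum>r<d. (b r + (if r = e then c else 0))\<^sup>2) = (\<Sum>r<d. (b r)\<^sup>2 + (if r = e then 2 * b r * c + c\<^sup>2 else 0))"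
    by (intro sum.cong) (auto simp: power2_sum)
  thus ?thesis using assms by (simp add: sum.distrib)
qed

locale gaussian_noise =
  fixes M :: "'a measure" and W :: "'a \<Rightarrow> nat \<Rightarrow> real" and n :: nat and \<sigma> :: real
  assumes iid_gaussian: "iid_gaussian M W n \<sigma>"
begin

sublocale prob_space M
  using iid_gaussian unfolding iid_gaussian_def by auto

lemma sigma_pos: "\<sigma> > 0"
  using iid_gaussian unfolding iid_gaussian_def by auto

definition noise_coord :: "(nat \<Rightarrow> real) \<Rightarrow> 'a \<Rightarrow> real" where
  "noise_coord v \<omega> = vinner n v (W \<omega>) / \<sigma>"

lemma measurable_noise_coord [measurable]: "noise_coord v \<in> borel_measurable M"
proof -
  have "(\<lambda>\<omega>. W \<omega> i) \<in> borel_measurable M" if "i < n" for i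
    using iid_gaussian that unfolding iid_gaussian_def by (auto dest!: distributed_measurable)
  thus ?thesis unfolding noise_coord_def vinner_def by measurable
qed

lemma noise_coord_lincomb: "noise_coord (lincomb d u b) \<omega> = (\<Sum>r<d. b r * noise_coord (u r) \<omega>)"
  unfolding noise_coord_def vinner_lincomb_left by (simp add: sum_divide_distrib)

lemma mgf_noise_coord:
  "(\<integral>\<^sup>+\<omega>. ennreal (exp (noise_coord v \<omega>)) \<partial>M) = ennreal (exp (sqnorm n v / 2))"
proof -
  have indep: "indep_vars (\<lambda>_. borel) (\<lambda>i \<omega>. ennreal (exp (v i * W \<omega> i / \<sigma>))) {..<n}"
    using iid_gaussian unfolding iid_gaussian_def
    by (intro indep_vars_compose2[where Y="\<lambda>i x. ennreal (exp (v i * x / \<sigma>))"]) auto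
  have coord: "(\<integral>\<^sup>+\<omega>. ennreal (exp (v i * W \<omega> i / \<sigma>)) \<partial>M) = ennreal (exp ((v i)\<^sup>2 / 2))"
    if "i < n" for i
  proof -
    have "distributed M lborel (\<lambda>\<omega>. W \<omega> i) (normal_density 0 \<sigma>)"
      using iid_gaussian that unfolding iid_gaussian_def by auto
    hence "(\<integral>\<^sup>+\<omega>. ennreal (exp (v i * W \<omega> i / \<sigma>)) \<partial>M)
        = (\<integral>\<^sup>+x. ennreal (normal_density 0 \<sigma> x * exp ((v i / \<sigma>) * x + 0 * x\<^sup>2)) \<partial>lborel)"
      by (subst distributed_nn_integral[symmetric]) (auto simp: ennreal_mult)
    also have "\<dots> = ennreal (exp ((v i / \<sigma>)\<^sup>2 * \<sigma>\<^sup>2 / (2 * (1 - 2 * 0 * \<sigma>\<^sup>2))) / sqrt (1 - 2 * 0 * \<sigma>\<^sup>2))"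
      by (rule nn_integral_normal_density_exp_quadratic[OF sigma_pos]) simp
    finally show ?thesis
      using sigma_pos by (simp add: power_divide)
  qed
  have "(\<integral>\<^sup>+\<omega>. ennreal (exp (noise_coord v \<omega>)) \<partial>M)
      = (\<integral>\<^sup>+\<omega>. (\<Prod>i<n. ennreal (exp (v i * W \<omega> i / \<sigma>))) \<partial>M)"
    unfolding noise_coord_def vinner_def
    by (intro nn_integral_cong) (simp add: prod_ennreal sum_divide_distrib exp_sum)
  also have "\<dots> = (\<Prod>i<n. \<integral>\<^sup>+\<omega>. ennreal (exp (v i * W \<omega> i / \<sigma>)) \<partial>M)"
    by (rule indep_vars_nn_integral[OF _ indep]) auto
  also have "\<dots> = ennreal (exp (sqnorm n v / 2))"
    unfolding sqnorm_def vinner_def using coord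
    by (simp add: prod_ennreal exp_sum sum_divide_distrib power2_eq_square)
  finally show ?thesis .
qed

lemma nn_integral_exp_partial_chisq_Suc:
  assumes "e < d" "0 \<le> \<theta>"
  shows "(\<integral>\<^sup>+\<omega>. ennreal (exp (\<theta> * (\<Sum>r<Suc e. (noise_coord (u r) \<omega>)\<^sup>2) + (\<Sum>r<d. b r * noise_coord (u r) \<omega>))) \<partial>M)
    = (\<integral>\<^sup>+t. ennreal (normal_density 0 1 t) * (\<integral>\<^sup>+\<omega>. ennreal (exp (\<theta> * (\<Sum>r<e. (noise_coord (u r) \<omega>)\<^sup>2)
        + (\<Sum>r<d. (b r + (if r = e then sqrt (2 * \<theta>) * t else 0)) * noise_coord (u r) \<omega>))) \<partial>M) \<partial>lborel)"
  using nn_integral_exp_square_linearize[of "\<lambda>\<omega>. \<theta> * (\<Sum>r<e. (noise_coord (u r) \<omega>)\<^sup>2)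
      + (\<Sum>r<d. b r * noise_coord (u r) \<omega>)" "noise_coord (u e)" \<theta>] assms
  unfolding sum_lessThan_add_delta_mult[OF assms(1)] by (simp add: algebra_simps)

text \<open>Each induction step trades one square for a tilt of the linear part, by Hubbard--Stratonovich.\<close>

lemma mgf_partial_chisq_tilted:
  assumes on: "orthonormal n d u" and \<theta>: "0 \<le> \<theta>" "\<theta> < 1/2"
  shows "e \<le> d \<Longrightarrow>
    (\<integral>\<^sup>+\<omega>. ennreal (exp (\<theta> * (\<Sum>r<e. (noise_coord (u r) \<omega>)\<^sup>2) + (\<Sum>r<d. b r * noise_coord (u r) \<omega>))) \<partial>M)
    = ennreal ((1 - 2 * \<theta>) powr (- real e / 2) *
        exp ((\<Sum>r<d. (b r)\<^sup>2) / 2 + \<theta> / (1 - 2 * \<theta>) * (\<Sum>r<e. (b r)\<^sup>2)))"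
proof (induction e arbitrary: b)
  case 0
  have "(\<integral>\<^sup>+\<omega>. ennreal (exp (\<Sum>r<d. b r * noise_coord (u r) \<omega>)) \<partial>M)
      = ennreal (exp (sqnorm n (lincomb d u b) / 2))"
    unfolding noise_coord_lincomb[symmetric] by (rule mgf_noise_coord)
  thus ?case using \<theta>
    by (simp add: sqnorm_def orthonormal_vinner_lincomb_lincomb[OF on] power2_eq_square)
next
  case (Suc e)
  hence "e < d" by simp
  define s where "s = sqrt (2 * \<theta>)"
  define \<kappa> where "\<kappa> = \<theta> / (1 - 2 * \<theta>)"
  define C where "C = (1 - 2 * \<theta>) powr (- real e / 2) * exp ((\<Sum>r<d. (b r)\<^sup>2) / 2 + \<kappa> * (\<Sum>r<e. (b r)\<^sup>2))"
  define b' where "b' t r = b r + (if r = e then s * t else 0)" for t r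
  have "(\<Sum>r<e. (b' t r)\<^sup>2) = (\<Sum>r<e. (b r)\<^sup>2)" for t by (intro sum.cong) (auto simp: b'_def)
  moreover have "(s * t)\<^sup>2 = 2 * \<theta> * t\<^sup>2" for t using \<theta> by (simp add: s_def power_mult_distrib)
  ultimately have "(\<Sum>r<d. (b' t r)\<^sup>2) / 2 + \<kappa> * (\<Sum>r<e. (b' t r)\<^sup>2)
      = (\<Sum>r<d. (b r)\<^sup>2) / 2 + \<kappa> * (\<Sum>r<e. (b r)\<^sup>2) + (b e * s * t + \<theta> * t\<^sup>2)" for t
    unfolding b'_def sum_lessThan_add_delta_square[OF \<open>e < d\<close>] by (simp add: algebra_simps)
  hence IH: "(\<integral>\<^sup>+\<omega>. ennreal (exp (\<theta> * (\<Sum>r<e. (noise_coord (u r) \<omega>)\<^sup>2) + (\<Sum>r<d. b' t r * noise_coord (u r) \<omega>))) \<partial>M)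
      = ennreal (C * exp (b e * s * t + \<theta> * t\<^sup>2))" for t
    using Suc.IH[of "b' t"] \<open>e < d\<close> by (simp add: C_def \<kappa>_def exp_add mult.assoc)
  have exponent: "(b e * s)\<^sup>2 * 1\<^sup>2 / (2 * (1 - 2 * \<theta> * 1\<^sup>2)) = \<kappa> * (b e)\<^sup>2"
    using \<theta> by (simp add: \<kappa>_def s_def power_mult_distrib field_simps)
  have "(\<integral>\<^sup>+\<omega>. ennreal (exp (\<theta> * (\<Sum>r<Suc e. (noise_coord (u r) \<omega>)\<^sup>2) + (\<Sum>r<d. b r * noise_coord (u r) \<omega>))) \<partial>M)
      = ennreal C * (\<integral>\<^sup>+t. ennreal (normal_density 0 1 t * exp ((b e * s) * t + \<theta> * t\<^sup>2)) \<partial>lborel)"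
    unfolding nn_integral_exp_partial_chisq_Suc[OF \<open>e < d\<close> \<theta>(1)] s_def[symmetric] b'_def[symmetric] IH
    using \<theta> by (subst nn_integral_cmult[symmetric]) (auto simp: C_def ennreal_mult[symmetric] mult_ac intro!: nn_integral_cong)
  also have "\<dots> = ennreal C * ennreal (exp ((b e * s)\<^sup>2 * 1\<^sup>2 / (2 * (1 - 2 * \<theta> * 1\<^sup>2))) / sqrt (1 - 2 * \<theta> * 1\<^sup>2))"
    using \<theta> by (subst nn_integral_normal_density_exp_quadratic) auto
  also have "\<dots> = ennreal C * ennreal (exp (\<kappa> * (b e)\<^sup>2) / sqrt (1 - 2 * \<theta>))"
    unfolding exponent by simp
  also have "\<dots> = ennreal ((1 - 2 * \<theta>) powr (- real (Suc e) / 2) *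
        exp ((\<Sum>r<d. (b r)\<^sup>2) / 2 + \<kappa> * (\<Sum>r<Suc e. (b r)\<^sup>2)))"
  proof -
    have "(1 - 2 * \<theta>) powr (- real (Suc e) / 2) = (1 - 2 * \<theta>) powr (- real e / 2) / sqrt (1 - 2 * \<theta>)"
      using \<theta> by (intro powr_minus_Suc_half) simp
    moreover have "C * (exp (\<kappa> * (b e)\<^sup>2) / sqrt (1 - 2 * \<theta>)) = (1 - 2 * \<theta>) powr (- real e / 2) / sqrt (1 - 2 * \<theta>)
        * exp ((\<Sum>r<d. (b r)\<^sup>2) / 2 + \<kappa> * (\<Sum>r<Suc e. (b r)\<^sup>2))"
      unfolding C_def by (simp add: exp_add distrib_left mult_ac)
    ultimately show ?thesis
      using \<theta> by (simp add: C_def ennreal_mult[symmetric])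
  qed
  finally show ?case unfolding \<kappa>_def .
qed

definition proj_chisq :: "(nat \<Rightarrow> nat \<Rightarrow> real) \<Rightarrow> nat set \<Rightarrow> 'a \<Rightarrow> real" where
  "proj_chisq X I \<omega> = sqnorm n (proj n X I (W \<omega>)) / \<sigma>\<^sup>2"

lemma proj_chisq_eq_sum:
  assumes "orthonormal_basis n X I d u"
  shows "proj_chisq X I \<omega> = (\<Sum>r<d. (noise_coord (u r) \<omega>)\<^sup>2)"
  unfolding proj_chisq_def sqnorm_proj_eq_sum[OF assms] noise_coord_def
  by (simp add: sum_divide_distrib power_divide)

lemma proj_chisq_nonneg: "proj_chisq X I \<omega> \<ge> 0"
  unfolding proj_chisq_def using sqnorm_nonneg by simp

lemma measurable_proj_chisq [measurable]:
  assumes "finite I" shows "proj_chisq X I \<in> borel_measurable M"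
proof -
  obtain d u where "orthonormal_basis n X I d u" using orthonormal_basis_exists[OF assms] by blast
  hence "proj_chisq X I = (\<lambda>\<omega>. \<Sum>r<d. (noise_coord (u r) \<omega>)\<^sup>2)"
    by (simp add: fun_eq_iff proj_chisq_eq_sum)
  thus ?thesis by simp
qed

lemma mgf_proj_chisq:
  assumes "finite I" "0 \<le> \<theta>" "\<theta> < 1/2"
  shows "(\<integral>\<^sup>+\<omega>. ennreal (exp (\<theta> * proj_chisq X I \<omega>)) \<partial>M)
     \<le> ennreal ((1 - 2 * \<theta>) powr (- real (card I) / 2))"
proof -
  obtain d u where basis: "orthonormal_basis n X I d u" using orthonormal_basis_exists[OF assms(1)] by blast
  hence "orthonormal n d u" and "d \<le> card I" by (auto simp: orthonormal_basis_def)
  have "(\<integral>\<^sup>+\<omega>. ennreal (exp (\<theta> * proj_chisq X I \<omega>)) \<partial>M)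
     = (\<integral>\<^sup>+\<omega>. ennreal (exp (\<theta> * (\<Sum>r<d. (noise_coord (u r) \<omega>)\<^sup>2)
             + (\<Sum>r<d. 0 * noise_coord (u r) \<omega>))) \<partial>M)"
    unfolding proj_chisq_eq_sum[OF basis] by simp
  also have "\<dots> = ennreal ((1 - 2 * \<theta>) powr (- real d / 2))"
    using mgf_partial_chisq_tilted[OF \<open>orthonormal n d u\<close> assms(2,3) order_refl, of "\<lambda>_. 0"] by simp
  also have "\<dots> \<le> ennreal ((1 - 2 * \<theta>) powr (- real (card I) / 2))"
    using assms \<open>d \<le> card I\<close> by (auto intro!: ennreal_leI powr_mono')
  finally show ?thesis .
qed

end

section \<open>Tail and moment bounds\<close>

lemma (in prob_space) measure_ge_le_exp_mgf:
  assumes "0 < s" and [measurable]: "f \<in> borel_measurable M"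
    and mgf: "(\<integral>\<^sup>+x. ennreal (exp (s * f x)) \<partial>M) \<le> ennreal K" and "0 \<le> K"
  shows "measure M {x \<in> space M. a \<le> f x} \<le> exp (- s * a) * K"
proof -
  have "emeasure M {x \<in> space M. a \<le> f x}
      \<le> ennreal (exp (- s * a)) * (\<integral>\<^sup>+x. ennreal (exp (s * f x)) * indicator (space M) x \<partial>M)"
    using \<open>0 < s\<close> by (intro Chernoff_ineq_nn_integral_ge) auto
  also have "(\<integral>\<^sup>+x. ennreal (exp (s * f x)) * indicator (space M) x \<partial>M) = (\<integral>\<^sup>+x. ennreal (exp (s * f x)) \<partial>M)"
    by (intro nn_integral_cong) simp
  also have "ennreal (exp (- s * a)) * \<dots> \<le> ennreal (exp (- s * a) * K)"
    using mgf \<open>0 \<le> K\<close> by (simp add: ennreal_mult mult_left_mono)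
  finally show ?thesis
    using \<open>0 \<le> K\<close> by (simp add: emeasure_eq_measure ennreal_le_iff)
qed

lemma power_le_exp:
  fixes y c :: real assumes "0 \<le> y" "0 < c"
  shows "y ^ m \<le> (c * real m) ^ m * exp (y / c)"
proof (cases "m = 0")
  case False
  define t where "t = y / (c * real m)"
  have "t \<le> exp t" using exp_ge_add_one_self[of t] by linarith
  hence "t ^ m \<le> exp t ^ m" using assms by (intro power_mono) (auto simp: t_def)
  also have "exp t ^ m = exp (y / c)"
    using False by (simp add: t_def exp_of_nat_mult[symmetric])
  finally have "(c * real m) ^ m * t ^ m \<le> (c * real m) ^ m * exp (y / c)"
    using assms by (intro mult_left_mono) auto
  moreover have "(c * real m) ^ m * t ^ m = y ^ m"
    using False assms by (simp add: t_def power_mult_distrib[symmetric])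
  ultimately show ?thesis by simp
qed (use assms in simp)

text \<open>Below \<open>4 * B\<close> use the trivial bound; above it \<open>f\<^sup>m\<close> is dominated by \<open>exp (f / 8 - B / 4)\<close>.\<close>

lemma (in prob_space) nn_integral_power_le_of_mgf:
  assumes [measurable]: "f \<in> borel_measurable M" and f0: "\<And>x. x \<in> space M \<Longrightarrow> 0 \<le> f x"
    and mgf: "(\<integral>\<^sup>+x. ennreal (exp (f x / 8)) \<partial>M) \<le> ennreal K" and "0 \<le> K" "0 \<le> B"
  shows "(\<integral>\<^sup>+x. ennreal (f x ^ m) \<partial>M) \<le> ennreal ((4 * B) ^ m + (16 * real m) ^ m * exp (- B / 4) * K)"
proof -
  define c where "c = (16 * real m) ^ m * exp (- B / 4)"
  have "f x ^ m \<le> (4 * B) ^ m + c * exp (f x / 8)" if "x \<in> space M" for x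
  proof (cases "f x \<le> 4 * B")
    case True
    hence "f x ^ m \<le> (4 * B) ^ m" using f0[OF that] by (intro power_mono)
    moreover have "0 \<le> c * exp (f x / 8)" by (simp add: c_def)
    ultimately show ?thesis by linarith
  next
    case False
    have "f x ^ m \<le> (16 * real m) ^ m * exp (f x / 16)" using power_le_exp[of "f x" 16] f0[OF that] by simp
    also have "\<dots> \<le> (16 * real m) ^ m * exp (- B / 4 + f x / 8)"
      using False by (intro mult_left_mono) auto
    also have "\<dots> = c * exp (f x / 8)"
      unfolding c_def mult.assoc mult_exp_exp ..
    finally show ?thesis using \<open>0 \<le> B\<close> by (smt (verit) zero_le_power)
  qed
  hence "(\<integral>\<^sup>+x. ennreal (f x ^ m) \<partial>M) \<le> (\<integral>\<^sup>+x. ennreal ((4 * B) ^ m) + ennreal c * ennreal (exp (f x / 8)) \<partial>M)"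
    using \<open>0 \<le> B\<close> by (intro nn_integral_mono) (simp add: c_def ennreal_mult[symmetric] ennreal_plus[symmetric] del: ennreal_plus)
  also have "\<dots> = ennreal ((4 * B) ^ m) + ennreal c * (\<integral>\<^sup>+x. ennreal (exp (f x / 8)) \<partial>M)"
    by (simp add: nn_integral_add nn_integral_cmult emeasure_space_1)
  also have "\<dots> \<le> ennreal ((4 * B) ^ m) + ennreal c * ennreal K"
    using mgf by (intro add_left_mono mult_left_mono) auto
  also have "\<dots> = ennreal ((4 * B) ^ m + c * K)"
    using \<open>0 \<le> K\<close> \<open>0 \<le> B\<close> by (simp add: c_def ennreal_plus ennreal_mult)
  finally show ?thesis unfolding c_def .
qed

section \<open>Random unions of groups\<close>

definition bounded_subsets :: "nat \<Rightarrow> nat \<Rightarrow> nat set set" where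
  "bounded_subsets p L = {S. S \<subseteq> {1..p} \<and> card S \<le> L}"

lemma finite_bounded_subsets: "finite (bounded_subsets p L)"
  unfolding bounded_subsets_def by (rule finite_subset[of _ "Pow {1..p}"]) auto

lemma sum_power_le_Suc_power: "(\<Sum>l\<le>L. (p::nat) ^ l) \<le> (p + 1) ^ L"
proof (induction L)
  case (Suc L)
  have "(\<Sum>l\<le>Suc L. p ^ l) = (\<Sum>l\<le>L. p ^ l) + p * p ^ L" by simp
  also have "\<dots> \<le> (p + 1) ^ L + p * (p + 1) ^ L"
    using Suc by (intro add_mono mult_left_mono power_mono) auto
  finally show ?case by simp
qed simp

lemma card_bounded_subsets_le: "card (bounded_subsets p L) \<le> (p + 1) ^ L"
proof -
  have "bounded_subsets p L = (\<Union>l\<le>L. {S. S \<subseteq> {1..p} \<and> card S = l})"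
    unfolding bounded_subsets_def by auto
  hence "card (bounded_subsets p L) \<le> (\<Sum>l\<le>L. card {S. S \<subseteq> {1..p} \<and> card S = l})"
    by (simp add: card_UN_le)
  also have "\<dots> = (\<Sum>l\<le>L. p choose l)" by (simp add: n_subsets)
  also have "\<dots> \<le> (\<Sum>l\<le>L. p ^ l)"
    by (intro sum_mono) (metis binomial_eq_0 binomial_le_pow not_le zero_le)
  also have "\<dots> \<le> (p + 1) ^ L" by (rule sum_power_le_Suc_power)
  finally show ?thesis .
qed

lemma group_partition_card_le_tstar:
  assumes "is_group_partition p k G" "j \<in> {1..p}"
  shows "finite (G j)" "1 \<le> card (G j)" "card (G j) \<le> tstar p G"
proof -
  have "G j \<subseteq> {1..k}" using assms unfolding is_group_partition_def by blast
  thus fin: "finite (G j)" using finite_subset by blast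
  show "1 \<le> card (G j)" using fin assms by (auto simp: is_group_partition_def Suc_le_eq card_gt_0_iff)
  show "card (G j) \<le> tstar p G" unfolding tstar_def using assms(2) by (intro Max_ge) auto
qed

lemma group_partition_tstar_ge_1: "is_group_partition p k G \<Longrightarrow> 1 \<le> tstar p G"
  using group_partition_card_le_tstar[of p k G 1] by (force simp: is_group_partition_def)

lemma card_UN_groups_le:
  assumes "is_group_partition p k G" "S \<subseteq> {1..p}"
  shows "finite (\<Union>j\<in>S. G j)" "card (\<Union>j\<in>S. G j) \<le> card S * tstar p G"
proof -
  have "finite S" using assms(2) finite_subset by blast
  thus "finite (\<Union>j\<in>S. G j)" using group_partition_card_le_tstar(1)[OF assms(1)] assms(2) by auto
  have "card (\<Union>j\<in>S. G j) \<le> (\<Sum>j\<in>S. card (G j))" by (rule card_UN_le[OF \<open>finite S\<close>])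
  also have "\<dots> \<le> (\<Sum>j\<in>S. tstar p G)"
    using group_partition_card_le_tstar(3)[OF assms(1)] assms(2) by (intro sum_mono) auto
  finally show "card (\<Union>j\<in>S. G j) \<le> card S * tstar p G" by simp
qed

text \<open>The number of candidate supports times the exponential moment of one of them.\<close>

lemma Suc_power_mult_powr_le_exp:
  fixes p t b :: real assumes "1 \<le> p" "1 \<le> t" "1 \<le> b" "b \<le> exp 1" "0 \<le> c" "c \<le> L * t"
  shows "(p + 1) ^ L * b powr (c / 2) \<le> exp (5 / 2 * L * max t (ln p))"
proof -
  define \<mu> where "\<mu> = max t (ln p)"
  have "ln (p + 1) \<le> ln (2 * p)" using assms by simp
  also have "\<dots> = ln 2 + ln p" using assms by (simp add: ln_mult)
  also have "\<dots> \<le> 2 * \<mu>" using ln_2_less_1 assms by (simp add: \<mu>_def)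
  finally have "exp (L * ln (p + 1)) \<le> exp (L * (2 * \<mu>))" by (simp add: mult_left_mono)
  moreover have "exp (L * ln (p + 1)) = (p + 1) ^ L" using assms by (simp add: exp_of_nat_mult)
  ultimately have "(p + 1) ^ L \<le> exp (L * (2 * \<mu>))" by simp
  moreover have "b powr (c / 2) \<le> exp (L * \<mu> / 2)"
  proof -
    have "ln b \<le> ln (exp 1)" using assms by (subst ln_le_cancel_iff) auto
    hence "c * ln b \<le> c" using assms mult_left_mono[of "ln b" 1 c] by simp
    moreover have "L * t \<le> L * \<mu>" by (simp add: \<mu>_def mult_left_mono)
    ultimately show ?thesis using assms by (simp add: powr_def)
  qed
  ultimately have "(p + 1) ^ L * b powr (c / 2) \<le> exp (L * (2 * \<mu>)) * exp (L * \<mu> / 2)"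
    by (intro mult_mono) auto
  also have "\<dots> = exp (5 / 2 * L * \<mu>)" by (simp add: exp_add[symmetric] algebra_simps)
  finally show ?thesis unfolding \<mu>_def .
qed

context gaussian_noise
begin

lemma measurable_proj_chisq_random_groups:
  assumes G: "is_group_partition p k G" and A: "random_group_set M A p L"
  shows "(\<lambda>\<omega>. proj_chisq X (\<Union>j\<in>A \<omega>. G j) \<omega>) \<in> borel_measurable M"
proof -
  let ?F = "bounded_subsets p L"
  let ?Y = "\<lambda>S. proj_chisq X (\<Union>j\<in>S. G j)"
  have meas: "(\<lambda>\<omega>. \<Sum>S\<in>?F. indicator {\<omega>\<in>space M. A \<omega> = S} \<omega> * ?Y S \<omega>) \<in> borel_measurable M"
    using A card_UN_groups_le(1)[OF G]
    by (intro borel_measurable_sum borel_measurable_times borel_measurable_indicator measurable_proj_chisq)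
      (auto simp: random_group_set_def bounded_subsets_def)
  have eq: "(\<Sum>S\<in>?F. indicator {\<omega>\<in>space M. A \<omega> = S} \<omega> * ?Y S \<omega>) = ?Y (A \<omega>) \<omega>"
    if "\<omega> \<in> space M" for \<omega>
  proof -
    have "A \<omega> \<in> ?F" using A that by (simp add: random_group_set_def bounded_subsets_def)
    have "(\<Sum>S\<in>?F. indicator {\<omega>\<in>space M. A \<omega> = S} \<omega> * ?Y S \<omega>) = (\<Sum>S\<in>?F. if A \<omega> = S then ?Y S \<omega> else 0)"
      using that by (intro sum.cong) (auto simp: indicator_def)
    also have "\<dots> = ?Y (A \<omega>) \<omega>" using \<open>A \<omega> \<in> ?F\<close> finite_bounded_subsets by (simp only: sum.delta') simp
    finally show ?thesis .
  qed
  show ?thesis by (rule measurable_cong[THEN iffD1, OF _ meas]) (simp add: eq)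
qed

lemma mgf_proj_chisq_random_groups:
  assumes G: "is_group_partition p k G" and A: "random_group_set M A p L"
    and \<theta>: "0 \<le> \<theta>" "\<theta> < 1/2"
  shows "(\<integral>\<^sup>+\<omega>. ennreal (exp (\<theta> * proj_chisq X (\<Union>j\<in>A \<omega>. G j) \<omega>)) \<partial>M)
    \<le> ennreal ((real p + 1) ^ L * (1 - 2 * \<theta>) powr (- real (L * tstar p G) / 2))"
proof -
  let ?F = "bounded_subsets p L"
  let ?mgf = "\<lambda>S \<omega>. ennreal (exp (\<theta> * proj_chisq X (\<Union>j\<in>S. G j) \<omega>))"
  have S_fin: "finite (\<Union>j\<in>S. G j)" and S_card: "card (\<Union>j\<in>S. G j) \<le> L * tstar p G" if "S \<in> ?F" for S
    using card_UN_groups_le[OF G, of S] that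
    by (auto simp: bounded_subsets_def intro: order.trans mult_right_mono)
  have "(\<integral>\<^sup>+\<omega>. ?mgf (A \<omega>) \<omega> \<partial>M) \<le> (\<integral>\<^sup>+\<omega>. (\<Sum>S\<in>?F. ?mgf S \<omega>) \<partial>M)"
  proof (intro nn_integral_mono)
    fix \<omega> assume "\<omega> \<in> space M"
    hence "A \<omega> \<in> ?F" using A by (simp add: random_group_set_def bounded_subsets_def)
    thus "?mgf (A \<omega>) \<omega> \<le> (\<Sum>S\<in>?F. ?mgf S \<omega>)"
      using finite_bounded_subsets by (intro member_le_sum) auto
  qed
  also have "\<dots> = (\<Sum>S\<in>?F. \<integral>\<^sup>+\<omega>. ?mgf S \<omega> \<partial>M)"
    using S_fin by (intro nn_integral_sum) auto
  also have "\<dots> \<le> (\<Sum>S\<in>?F. ennreal ((1 - 2 * \<theta>) powr (- real (L * tstar p G) / 2)))"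
  proof (intro sum_mono)
    fix S assume "S \<in> ?F"
    have "(\<integral>\<^sup>+\<omega>. ?mgf S \<omega> \<partial>M) \<le> ennreal ((1 - 2 * \<theta>) powr (- real (card (\<Union>j\<in>S. G j)) / 2))"
      using mgf_proj_chisq[OF S_fin[OF \<open>S \<in> ?F\<close>] \<theta>] .
    also have "\<dots> \<le> ennreal ((1 - 2 * \<theta>) powr (- real (L * tstar p G) / 2))"
      using S_card[OF \<open>S \<in> ?F\<close>] \<theta> by (intro ennreal_leI powr_mono') (auto simp flip: of_nat_mult)
    finally show "(\<integral>\<^sup>+\<omega>. ?mgf S \<omega> \<partial>M) \<le> \<dots>" .
  qed
  also have "\<dots> = ennreal (real (card ?F) * (1 - 2 * \<theta>) powr (- real (L * tstar p G) / 2))"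
    by (simp add: ennreal_mult ennreal_of_nat_eq_real_of_nat)
  also have "\<dots> \<le> ennreal ((real p + 1) ^ L * (1 - 2 * \<theta>) powr (- real (L * tstar p G) / 2))"
  proof (intro ennreal_leI mult_right_mono)
    show "real (card ?F) \<le> (real p + 1) ^ L"
      using card_bounded_subsets_le[of p L] by (metis of_nat_1 of_nat_add of_nat_le_iff of_nat_power)
  qed simp
  finally show ?thesis .
qed

lemma proj_chisq_empty: "proj_chisq X {} \<omega> = 0"
proof -
  obtain d u where "orthonormal_basis n X {} d u" using orthonormal_basis_exists by blast
  moreover from this have "d = 0" by (simp add: orthonormal_basis_def)
  ultimately show ?thesis by (simp add: proj_chisq_eq_sum)
qed

lemma proj_chisq_tail:
  assumes "finite I" "real (card I) \<le> nI" "4 * nI \<le> z\<^sup>2"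
  shows "measure M {\<omega> \<in> space M. z\<^sup>2 \<le> proj_chisq X I \<omega>} \<le> exp (- z\<^sup>2 / 16)"
proof -
  have "(\<integral>\<^sup>+\<omega>. ennreal (exp (1/4 * proj_chisq X I \<omega>)) \<partial>M) \<le> ennreal (2 powr (real (card I) / 2))"
    using mgf_proj_chisq[OF assms(1), of "1/4"] by (simp add: powr_minus_divide powr_divide)
  hence "measure M {\<omega> \<in> space M. z\<^sup>2 \<le> proj_chisq X I \<omega>} \<le> exp (- (1/4) * z\<^sup>2) * 2 powr (real (card I) / 2)"
    using assms(1) by (intro measure_ge_le_exp_mgf) auto
  also have "\<dots> \<le> exp (- z\<^sup>2 / 4) * exp (z\<^sup>2 / 8)"
  proof -
    have "2 powr (real (card I) / 2) \<le> exp (real (card I) / 2)"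
      using ln_2_less_1 mult_left_mono[of "ln 2" 1 "real (card I)"] by (simp add: powr_def)
    also have "\<dots> \<le> exp (z\<^sup>2 / 8)" using assms(2,3) by simp
    finally show ?thesis by (simp add: mult_left_mono)
  qed
  also have "\<dots> \<le> exp (- z\<^sup>2 / 16)" by (simp add: exp_add[symmetric])
  finally show ?thesis .
qed

lemma proj_chisq_random_groups_tail:
  assumes G: "is_group_partition p k G" and A: "random_group_set M A p L"
    and z: "16 * real L * max (real (tstar p G)) (ln (real p)) \<le> z\<^sup>2"
  shows "measure M {\<omega> \<in> space M. z\<^sup>2 \<le> proj_chisq X (\<Union>j\<in>A \<omega>. G j) \<omega>} \<le> exp (- z\<^sup>2 / 16)"
proof -
  let ?\<mu> = "max (real (tstar p G)) (ln (real p))"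
  have p: "1 \<le> real p" and t: "1 \<le> real (tstar p G)"
    using G group_partition_tstar_ge_1 by (auto simp: is_group_partition_def)
  have "(\<integral>\<^sup>+\<omega>. ennreal (exp (1/4 * proj_chisq X (\<Union>j\<in>A \<omega>. G j) \<omega>)) \<partial>M)
      \<le> ennreal ((real p + 1) ^ L * 2 powr (real (L * tstar p G) / 2))"
    using mgf_proj_chisq_random_groups[OF G A, of "1/4"] by (simp add: powr_minus_divide powr_divide)
  hence "measure M {\<omega> \<in> space M. z\<^sup>2 \<le> proj_chisq X (\<Union>j\<in>A \<omega>. G j) \<omega>}
      \<le> exp (- (1/4) * z\<^sup>2) * ((real p + 1) ^ L * 2 powr (real (L * tstar p G) / 2))"
    by (intro measure_ge_le_exp_mgf measurable_proj_chisq_random_groups[OF G A]) auto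
  also have "\<dots> \<le> exp (- (1/4) * z\<^sup>2) * exp (5 / 2 * real L * ?\<mu>)"
    using p t exp_ge_add_one_self[of 1] by (intro mult_left_mono Suc_power_mult_powr_le_exp) auto
  also have "\<dots> \<le> exp (- z\<^sup>2 / 16)"
  proof -
    have "0 \<le> real L * ?\<mu>" using t by simp
    hence "- (1/4) * z\<^sup>2 + 5 / 2 * real L * ?\<mu> \<le> - z\<^sup>2 / 16" using z by linarith
    thus ?thesis by (simp only: mult_exp_exp exp_le_cancel_iff)
  qed
  finally show ?thesis .
qed

lemma proj_chisq_random_groups_moment:
  assumes G: "is_group_partition p k G" and A: "random_group_set M A p L" and "1 \<le> m"
  shows "(\<integral>\<^sup>+\<omega>. ennreal (proj_chisq X (\<Union>j\<in>A \<omega>. G j) \<omega> ^ m) \<partial>M)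
    \<le> ennreal ((64 ^ m + (16 * real m) ^ m) * real L ^ m * max (real (tstar p G)) (ln (real p)) ^ m)"
proof (cases "L = 0")
  case True
  have "A \<omega> = {}" if "\<omega> \<in> space M" for \<omega>
    using A that True by (auto simp: random_group_set_def card_eq_0_iff dest: finite_subset)
  hence "(\<integral>\<^sup>+\<omega>. ennreal (proj_chisq X (\<Union>j\<in>A \<omega>. G j) \<omega> ^ m) \<partial>M) = (\<integral>\<^sup>+\<omega>. 0 \<partial>M)"
    using \<open>1 \<le> m\<close> by (intro nn_integral_cong) (simp add: proj_chisq_empty)
  thus ?thesis by simp
next
  case False
  let ?\<mu> = "max (real (tstar p G)) (ln (real p))"
  define B where "B = 16 * real L * ?\<mu>"
  define K where "K = (real p + 1) ^ L * (4/3) powr (real (L * tstar p G) / 2)"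
  have p: "1 \<le> real p" and t: "1 \<le> real (tstar p G)" and L: "1 \<le> real L"
    using G group_partition_tstar_ge_1 False by (auto simp: is_group_partition_def)
  have "1 \<le> real L * ?\<mu>" using mult_mono[of 1 "real L" 1 ?\<mu>] L t by simp
  have "(\<integral>\<^sup>+\<omega>. ennreal (exp (proj_chisq X (\<Union>j\<in>A \<omega>. G j) \<omega> / 8)) \<partial>M) \<le> ennreal K"
    using mgf_proj_chisq_random_groups[OF G A, of "1/8"]
    by (simp add: K_def powr_minus_divide powr_divide mult.commute)
  hence "(\<integral>\<^sup>+\<omega>. ennreal (proj_chisq X (\<Union>j\<in>A \<omega>. G j) \<omega> ^ m) \<partial>M)
      \<le> ennreal ((4 * B) ^ m + (16 * real m) ^ m * exp (- B / 4) * K)"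
    using measurable_proj_chisq_random_groups[OF G A] proj_chisq_nonneg t
    by (intro nn_integral_power_le_of_mgf) (auto simp: B_def K_def)
  also have "\<dots> \<le> ennreal ((64 ^ m + (16 * real m) ^ m) * real L ^ m * ?\<mu> ^ m)"
  proof (intro ennreal_leI)
    have "exp (- B / 4) * K \<le> exp (- B / 4) * exp (5 / 2 * real L * ?\<mu>)"
      unfolding K_def using p t exp_ge_add_one_self[of 1]
      by (intro mult_left_mono Suc_power_mult_powr_le_exp) auto
    also have "\<dots> \<le> 1" using L t by (simp add: B_def exp_add[symmetric])
    also have "\<dots> \<le> (real L * ?\<mu>) ^ m" using \<open>1 \<le> real L * ?\<mu>\<close> by simp
    finally have "(16 * real m) ^ m * exp (- B / 4) * K \<le> (16 * real m) ^ m * (real L * ?\<mu>) ^ m"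
      by (simp add: mult.assoc mult_left_mono)
    moreover have "(4 * B) ^ m = 64 ^ m * (real L * ?\<mu>) ^ m" by (simp add: B_def power_mult_distrib)
    ultimately show "(4 * B) ^ m + (16 * real m) ^ m * exp (- B / 4) * K
        \<le> (64 ^ m + (16 * real m) ^ m) * real L ^ m * ?\<mu> ^ m"
      by (simp add: algebra_simps power_mult_distrib)
  qed
  finally show ?thesis .
qed

end

theorem proposition3:
  shows
  "(\<forall>(M::'a measure) W n \<sigma> (X::nat \<Rightarrow> nat \<Rightarrow> real) k I (nI::real) (z::real).
      iid_gaussian M W n \<sigma> \<and> I \<subseteq> {1..k} \<and> real (card I) \<le> nI \<and> z\<^sup>2 \<ge> 4 * nI \<longrightarrow>
      measure M {\<omega>\<in>space M. sqnorm n (proj n X I (W \<omega>)) / \<sigma>\<^sup>2 \<ge> z\<^sup>2} \<le> exp (- z\<^sup>2 / 16))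
   \<and> (\<forall>(M::'a measure) W n \<sigma> (X::nat \<Rightarrow> nat \<Rightarrow> real) k p G A (L::nat) (z::real).
      iid_gaussian M W n \<sigma> \<and> is_group_partition p k G \<and> random_group_set M A p L \<and>
      z\<^sup>2 \<ge> 16 * real L * max (real (tstar p G)) (ln (real p)) \<longrightarrow>
      measure M {\<omega>\<in>space M. sqnorm n (proj n X (\<Union>j\<in>A \<omega>. G j) (W \<omega>)) / \<sigma>\<^sup>2 \<ge> z\<^sup>2}
        \<le> exp (- z\<^sup>2 / 16))
   \<and> (\<forall>m::nat. m \<ge> 1 \<longrightarrow> (\<exists>C::real.
      \<forall>(M::'a measure) W n \<sigma> (X::nat \<Rightarrow> nat \<Rightarrow> real) k p G A (L::nat).
        iid_gaussian M W n \<sigma> \<and> is_group_partition p k G \<and> random_group_set M A p L \<longrightarrow>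
        (\<integral>\<^sup>+\<omega>. ennreal ((sqnorm n (proj n X (\<Union>j\<in>A \<omega>. G j) (W \<omega>)) / \<sigma>\<^sup>2) ^ m) \<partial>M)
          \<le> ennreal (C * real L ^ m * max (real (tstar p G)) (ln (real p)) ^ m)))"
  apply (intro conjI allI impI; (elim conjE)?)
  subgoal for M W n \<sigma> X k I nI z
    using gaussian_noise.proj_chisq_tail[of M W n \<sigma> I nI z X] finite_subset[of I "{1..k}"]
    by (simp add: gaussian_noise_def gaussian_noise.proj_chisq_def)
  subgoal for M W n \<sigma> X k p G A L z
    using gaussian_noise.proj_chisq_random_groups_tail[of M W n \<sigma> p k G A L z X]
    by (simp add: gaussian_noise_def gaussian_noise.proj_chisq_def)
  apply (rule_tac x = "64 ^ m + (16 * real m) ^ m" in exI, intro allI impI, elim conjE)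
  subgoal for m M W n \<sigma> X k p G A L
    using gaussian_noise.proj_chisq_random_groups_moment[of M W n \<sigma> p k G A L m X]
    by (simp add: gaussian_noise_def gaussian_noise.proj_chisq_def)
  done

end
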